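(* Let $n\ge 2$ and $K\ge2$. The holomorphic map $\Phi_K=\pi_n\circ\Psi_K\colon(\mathbb{C}^{n(n-1)/2})^K\to\mathbb{C}^n\setminus\{0\}$ is a submersion (i.e. its differential has rank $n$) at a point $Z=(Z_1,\dots,Z_K)$ if and only if $Z\notin S_K$.
   Context: For $k\ge1$, $M_k\colon\mathbb{C}^{n(n-1)/2}\to\mathrm{SL}_n(\mathbb{C})$ is defined as follows: if $k$ is even, $Z_k=(z_{ij,k})_{1\le i<j\le n}$ and $M_k(Z_k)$ is the upper triangular unipotent matrix with $1$'s on the diagonal and entry $z_{ij,k}$ in position $(i,j)$, $i<j$; if $k$ is odd, $Z_k=(z_{ij,k})_{1\le j<i\le n}$ and $M_k(Z_k)$ is the lower triangular unipotent matrix with $1$'s on the diagonal and entry $z_{ij,k}$ in position $(i,j)$, $i>j$. Define $\Psi_K(Z_1,\dots,Z_K)=M_1(Z_1)^{-1}M_2(Z_2)^{-1}\cdots M_K(Z_K)^{-1}$, and let $\pi_n\colon\mathrm{SL}_n(\mathbb{C})\to\mathbb{C}^n\setminus\{0\}$ send a matrix to its last row. Define $$S_K=\bigcap_{\substack{1\le k<K\\ k\text{ odd}}}\{z_{n1,k}=\dots=z_{n(n-1),k}=0\}\ \cap\ \bigcap_{\substack{1\le k<K\\ k\text{ even}}}\{z_{1n,k}=\dots=z_{(n-1)n,k}=0\}\subset(\mathbb{C}^{n(n-1)/2})^K,$$ i.e. the set where the last row of every lower triangular factor $M_k$, $k<K$ odd, and the last column of every upper triangular factor $M_k$, $k<K$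 even, have all off-diagonal entries $0$ (no condition on $Z_K$). *)

theory Defs
  imports "HOL-Analysis.Analysis" "Jordan_Normal_Form.Matrix"
begin

text \<open>Coordinates: a point Z = (Z_1,...,Z_K) is a function Z k i j = z_{ij,k}
  (paper indices: k in 1..K, i,j in 1..n). Entries outside the coordinate
  index set are ignored by all constructions below.\<close>

definition coords :: "nat \<Rightarrow> nat \<Rightarrow> (nat \<times> nat \<times> nat) set" where
  "coords n K = {(k,i,j). 1 \<le> k \<and> k \<le> K \<and> 1 \<le> i \<and> i \<le> n \<and> 1 \<le> j \<and> j \<le> n \<and>
                   (if even k then i < j else j < i)}"

text \<open>M_k(Z_k): unipotent, upper triangular for even k, lower triangular for odd k.
  JNF matrices are 0-indexed, so entry (i,j) holds z_{(i+1)(j+1),k}.\<close>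
definition Mk :: "nat \<Rightarrow> nat \<Rightarrow> (nat \<Rightarrow> nat \<Rightarrow> nat \<Rightarrow> complex) \<Rightarrow> complex mat" where
  "Mk n k Z = mat n n (\<lambda>(i,j). if i = j then 1
                 else if even k \<and> i < j then Z k (i+1) (j+1)
                 else if odd k \<and> j < i then Z k (i+1) (j+1)
                 else 0)"

definition inv_mat :: "nat \<Rightarrow> complex mat \<Rightarrow> complex mat" where
  "inv_mat n A = (THE B. B \<in> carrier_mat n n \<and> A * B = 1\<^sub>m n \<and> B * A = 1\<^sub>m n)"

definition Psi :: "nat \<Rightarrow> nat \<Rightarrow> (nat \<Rightarrow> nat \<Rightarrow> nat \<Rightarrow> complex) \<Rightarrow> complex mat" where
  "Psi n K Z = foldr (\<lambda>k A. inv_mat n (Mk n k Z) * A) [1..<K+1] (1\<^sub>m n)"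

text \<open>Phi_K = pi_n o Psi_K : last row.\<close>
definition Phi :: "nat \<Rightarrow> nat \<Rightarrow> (nat \<Rightarrow> nat \<Rightarrow> nat \<Rightarrow> complex) \<Rightarrow> complex vec" where
  "Phi n K Z = row (Psi n K Z) (n - 1)"

definition dirs :: "nat \<Rightarrow> nat \<Rightarrow> (nat \<Rightarrow> nat \<Rightarrow> nat \<Rightarrow> complex) set" where
  "dirs n K = {W. \<forall>k i j. W k i j \<noteq> 0 \<longrightarrow> (k,i,j) \<in> coords n K}"

definition is_differential :: "nat \<Rightarrow> nat \<Rightarrow> (nat \<Rightarrow> nat \<Rightarrow> nat \<Rightarrow> complex)
     \<Rightarrow> ((nat \<Rightarrow> nat \<Rightarrow> nat \<Rightarrow> complex) \<Rightarrow> complex vec) \<Rightarrow> bool" where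
  "is_differential n K Z D \<longleftrightarrow>
     (\<forall>W \<in> dirs n K. D W \<in> carrier_vec n \<and>
        (\<forall>m < n. ((\<lambda>t::complex. Phi n K (\<lambda>k i j. Z k i j + t * W k i j) $ m)
                    has_field_derivative (D W $ m)) (at 0)))"

definition submersion_at :: "nat \<Rightarrow> nat \<Rightarrow> (nat \<Rightarrow> nat \<Rightarrow> nat \<Rightarrow> complex) \<Rightarrow> bool" where
  "submersion_at n K Z \<longleftrightarrow>
     (\<exists>D. is_differential n K Z D \<and> D ` dirs n K = carrier_vec n)"

definition S_set :: "nat \<Rightarrow> nat \<Rightarrow> (nat \<Rightarrow> nat \<Rightarrow> nat \<Rightarrow> complex) set" where
  "S_set n K = {Z. \<forall>k. 1 \<le> k \<and> k < K \<longrightarrow>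
      (odd k \<longrightarrow> (\<forall>j. 1 \<le> j \<and> j \<le> n - 1 \<longrightarrow> Z k n j = 0)) \<and>
      (even k \<longrightarrow> (\<forall>i. 1 \<le> i \<and> i \<le> n - 1 \<longrightarrow> Z k i n = 0))}"

end

theory Submission imports Defs begin

(* Every factor is M_k = 1 + N_k with N_k strictly
   triangular, so M_k^{-1} is the truncated Neumann series sum_{m<n} (-N_k)^m, a polynomial in
   the coordinates; differentiating M_k M_k^{-1} = 1 gives d(M_k^{-1}) = -M_k^{-1} dN_k M_k^{-1},
   and the product rule yields a map Phi_diff, which is the unique differential of Phi_K.

   Necessity: if Z is in S_K, then M_1, ..., M_{K-1} fix the last basis vector e_n (as a row and
   as a column), and the functional v |-> (v M_K)_n vanishes on every value of Phi_diff.
   Sufficiency: let a be the first factor whose last line is nontrivial.  A variation of the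
   single factor k changes Phi by -(r_k dN_k) M_k^{-1} ... M_K^{-1}, where r_k is the last row of
   M_1^{-1} ... M_k^{-1}.  Since Phi_diff is additive, two such variations (of the factors a and
   a+1 if a is odd, of a-1 and a+1 if a is even) already reach every vector of C^n. *)

lemma row_col_sum:
  "A \<in> carrier_mat n n \<Longrightarrow> B \<in> carrier_mat n n \<Longrightarrow> i < n \<Longrightarrow> j < n \<Longrightarrow>
   row A i \<bullet> col B j = (\<Sum>l<n. A $$ (i,l) * B $$ (l,j))"
  by (auto simp: scalar_prod_def atLeast0LessThan intro!: sum.cong)

lemma index_mult_sq:
  "A \<in> carrier_mat n n \<Longrightarrow> B \<in> carrier_mat n n \<Longrightarrow> i < n \<Longrightarrow> j < n \<Longrightarrow>
   (A * B) $$ (i,j) = (\<Sum>l<n. A $$ (i,l) * B $$ (l,j))"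
  by (simp add: row_col_sum)

lemma one_mult_sq [simp]: "(A :: complex mat) \<in> carrier_mat n n \<Longrightarrow> 1\<^sub>m n * A = A"
  by (rule left_mult_one_mat)

lemma mult_one_sq [simp]: "(A :: complex mat) \<in> carrier_mat n n \<Longrightarrow> A * 1\<^sub>m n = A"
  by (rule right_mult_one_mat)

lemma mult_carrier_sq [simp]:
  "A \<in> carrier_mat n n \<Longrightarrow> B \<in> carrier_mat n n \<Longrightarrow> A * B \<in> carrier_mat n n"
  by auto

lemma add_zero_smult_mat [simp]:
  "dim_row B = dim_row A \<Longrightarrow> dim_col B = dim_col A \<Longrightarrow> A + (0::complex) \<cdot>\<^sub>m B = A"
  by (intro eq_matI) auto

lemma one_minus_zero_mat [simp]: "(1\<^sub>m n :: complex mat) - 0\<^sub>m n n = 1\<^sub>m n"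
  by (intro eq_matI) auto

definition mat_deriv :: "nat \<Rightarrow> (complex \<Rightarrow> complex mat) \<Rightarrow> complex mat \<Rightarrow> bool" where
  "mat_deriv n A A' \<longleftrightarrow>
     (\<forall>i<n. \<forall>j<n. ((\<lambda>t. A t $$ (i,j)) has_field_derivative A' $$ (i,j)) (at 0))"

lemma mat_deriv_const: "mat_deriv n (\<lambda>t. C) (0\<^sub>m n n)"
  unfolding mat_deriv_def by auto

lemma mat_deriv_affine:
  assumes "A \<in> carrier_mat n n" "B \<in> carrier_mat n n"
  shows "mat_deriv n (\<lambda>t. A + t \<cdot>\<^sub>m B) B"
  unfolding mat_deriv_def
proof (intro allI impI)
  fix i j assume ij: "i < n" "j < n"
  have "((\<lambda>t. A $$ (i,j) + t * B $$ (i,j)) has_field_derivative 0 + 1 * B $$ (i,j)) (at 0)"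
    by (intro DERIV_add DERIV_cmult_right DERIV_const DERIV_ident)
  then show "((\<lambda>t. (A + t \<cdot>\<^sub>m B) $$ (i,j)) has_field_derivative B $$ (i,j)) (at 0)"
    using assms ij by simp
qed

lemma mat_deriv_diff:
  assumes "mat_deriv n A A'" "mat_deriv n B B'"
    and "\<And>t. B t \<in> carrier_mat n n" "B' \<in> carrier_mat n n"
  shows "mat_deriv n (\<lambda>t. A t - B t) (A' - B')"
  unfolding mat_deriv_def
proof (intro allI impI)
  fix i j assume ij: "i < n" "j < n"
  have "((\<lambda>t. A t $$ (i,j) - B t $$ (i,j)) has_field_derivative A' $$ (i,j) - B' $$ (i,j)) (at 0)"
    using assms(1,2) ij unfolding mat_deriv_def by (intro DERIV_diff) auto
  moreover have "(\<lambda>t. (A t - B t) $$ (i,j)) = (\<lambda>t. A t $$ (i,j) - B t $$ (i,j))"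
    using assms(3) ij by (intro ext) (metis carrier_matD index_minus_mat(1))
  ultimately show "((\<lambda>t. (A t - B t) $$ (i,j)) has_field_derivative (A' - B') $$ (i,j)) (at 0)"
    using assms(4) ij by simp
qed

lemma mat_deriv_mult:
  assumes "mat_deriv n A A'" "mat_deriv n B B'"
    and "\<And>t. A t \<in> carrier_mat n n" "A' \<in> carrier_mat n n"
    and "\<And>t. B t \<in> carrier_mat n n" "B' \<in> carrier_mat n n"
  shows "mat_deriv n (\<lambda>t. A t * B t) (A' * B 0 + A 0 * B')"
  unfolding mat_deriv_def
proof (intro allI impI)
  fix i j assume ij: "i < n" "j < n"
  have "((\<lambda>t. \<Sum>l<n. A t $$ (i,l) * B t $$ (l,j)) has_field_derivative
          (\<Sum>l<n. A' $$ (i,l) * B 0 $$ (l,j) + B' $$ (l,j) * A 0 $$ (i,l))) (at 0)"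
    using assms(1,2) ij unfolding mat_deriv_def by (intro DERIV_sum DERIV_mult) auto
  moreover have "(A' * B 0 + A 0 * B') $$ (i,j) =
      (\<Sum>l<n. A' $$ (i,l) * B 0 $$ (l,j) + B' $$ (l,j) * A 0 $$ (i,l))"
  proof -
    have "(A' * B 0 + A 0 * B') $$ (i,j) = (A' * B 0) $$ (i,j) + (A 0 * B') $$ (i,j)"
      using assms(3)[of 0, THEN carrier_matD(1)] assms(6) ij by (intro index_add_mat(1)) auto
    also have "\<dots> = (\<Sum>l<n. A' $$ (i,l) * B 0 $$ (l,j)) + (\<Sum>l<n. A 0 $$ (i,l) * B' $$ (l,j))"
      using assms ij by (simp add: index_mult_sq)
    finally show ?thesis by (simp add: sum.distrib mult.commute)
  qed
  moreover have "(\<lambda>t. (A t * B t) $$ (i,j)) = (\<lambda>t. \<Sum>l<n. A t $$ (i,l) * B t $$ (l,j))"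
    using assms(3,5) ij by (intro ext) (simp add: index_mult_sq)
  ultimately show "((\<lambda>t. (A t * B t) $$ (i,j)) has_field_derivative (A' * B 0 + A 0 * B') $$ (i,j)) (at 0)"
    by simp
qed

lemma mat_deriv_unique:
  assumes "mat_deriv n A A'" "mat_deriv n A A''" "A' \<in> carrier_mat n n" "A'' \<in> carrier_mat n n"
  shows "A' = A''"
proof (rule eq_matI)
  fix i j assume "i < dim_row A''" "j < dim_col A''"
  then have ij: "i < n" "j < n" using assms by auto
  show "A' $$ (i,j) = A'' $$ (i,j)"
    using assms(1,2) ij unfolding mat_deriv_def by (blast intro: DERIV_unique)
qed (use assms in auto)

text \<open>The factor M_k is the identity plus its strictly triangular part N_k.  Strictly
  triangular matrices are nilpotent: the m-th power has nonzero entries only at least m steps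
  away from the diagonal.\<close>

definition strict_part :: "nat \<Rightarrow> nat \<Rightarrow> (nat \<Rightarrow> nat \<Rightarrow> nat \<Rightarrow> complex) \<Rightarrow> complex mat" where
  "strict_part n k Y = mat n n (\<lambda>(i,j). if even k \<and> i < j then Y k (i+1) (j+1)
      else if odd k \<and> j < i then Y k (i+1) (j+1) else 0)"

lemma strict_part_carrier [simp]: "strict_part n k Y \<in> carrier_mat n n"
  by (simp add: strict_part_def)

lemma strict_part_dim [simp]: "dim_row (strict_part n k Y) = n" "dim_col (strict_part n k Y) = n"
  by (simp_all add: strict_part_def)

lemma Mk_eq_one_plus_strict: "Mk n k Y = 1\<^sub>m n + strict_part n k Y"
  by (intro eq_matI) (auto simp: Mk_def strict_part_def)

lemma Mk_carrier [simp]: "Mk n k Y \<in> carrier_mat n n"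
  by (simp add: Mk_def)

lemma Mk_dim [simp]: "dim_row (Mk n k Y) = n" "dim_col (Mk n k Y) = n"
  by (simp_all add: Mk_def)

definition strictly_triangular :: "nat \<Rightarrow> nat \<Rightarrow> complex mat \<Rightarrow> bool" where
  "strictly_triangular n k N \<longleftrightarrow> N \<in> carrier_mat n n \<and>
     (\<forall>i<n. \<forall>j<n. N $$ (i,j) \<noteq> 0 \<longrightarrow> (if even k then i < j else j < i))"

lemma strictly_triangular_strict_part: "strictly_triangular n k (strict_part n k Y)"
  unfolding strictly_triangular_def strict_part_def by auto

text \<open>The powers (-N)^m and the truncated Neumann series sum_{i<m} (-N)^i.\<close>

fun neg_pow :: "nat \<Rightarrow> complex mat \<Rightarrow> nat \<Rightarrow> complex mat" where
  "neg_pow n N 0 = 1\<^sub>m n"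
| "neg_pow n N (Suc m) = - (N * neg_pow n N m)"

fun neumann :: "nat \<Rightarrow> complex mat \<Rightarrow> nat \<Rightarrow> complex mat" where
  "neumann n N 0 = 0\<^sub>m n n"
| "neumann n N (Suc m) = 1\<^sub>m n - N * neumann n N m"

lemma neg_pow_carrier [simp]: "N \<in> carrier_mat n n \<Longrightarrow> neg_pow n N m \<in> carrier_mat n n"
  by (induction m) auto

lemma neumann_carrier [simp]: "N \<in> carrier_mat n n \<Longrightarrow> neumann n N m \<in> carrier_mat n n"
  by (induction m) auto

lemma neg_pow_dim [simp]:
  "N \<in> carrier_mat n n \<Longrightarrow> dim_row (neg_pow n N m) = n \<and> dim_col (neg_pow n N m) = n"
  using neg_pow_carrier[of N n m] by (simp only: carrier_mat_def mem_Collect_eq)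

lemma neumann_dim [simp]:
  "N \<in> carrier_mat n n \<Longrightarrow> dim_row (neumann n N m) = n \<and> dim_col (neumann n N m) = n"
  using neumann_carrier[of N n m] by (simp only: carrier_mat_def mem_Collect_eq)

lemma neg_pow_support:
  assumes "strictly_triangular n k N"
  shows "i < n \<Longrightarrow> j < n \<Longrightarrow> neg_pow n N m $$ (i,j) \<noteq> 0 \<Longrightarrow>
    (if even k then i + m \<le> j else j + m \<le> i)"
proof (induction m arbitrary: i j)
  case 0
  then show ?case by (auto split: if_splits)
next
  case (Suc m)
  have N: "N \<in> carrier_mat n n" using assms strictly_triangular_def by auto
  have "neg_pow n N (Suc m) $$ (i,j) = - (\<Sum>l<n. N $$ (i,l) * neg_pow n N m $$ (l,j))"
    using Suc.prems N by (simp add: index_mult_sq[symmetric])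
  with Suc.prems have "(\<Sum>l<n. N $$ (i,l) * neg_pow n N m $$ (l,j)) \<noteq> 0" by auto
  then obtain l where l: "l < n" "N $$ (i,l) \<noteq> 0" "neg_pow n N m $$ (l,j) \<noteq> 0"
    by (metis (no_types, lifting) lessThan_iff mult_eq_0_iff sum.neutral)
  have "if even k then i < l else l < i" using assms l Suc.prems unfolding strictly_triangular_def by blast
  moreover have "if even k then l + m \<le> j else j + m \<le> l" using Suc.IH l Suc.prems by blast
  ultimately show ?case by (auto split: if_splits)
qed

lemma neg_pow_nilpotent:
  assumes "strictly_triangular n k N"
  shows "neg_pow n N n = 0\<^sub>m n n"
proof (rule eq_matI)
  fix i j assume "i < dim_row (0\<^sub>m n n)" "j < dim_col (0\<^sub>m n n)"
  then have ij: "i < n" "j < n" by auto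
  show "neg_pow n N n $$ (i,j) = 0\<^sub>m n n $$ (i,j)"
    using neg_pow_support[OF assms ij, of n] ij by (cases "even k") auto
qed (use assms strictly_triangular_def in auto)

lemma neumann_comm:
  assumes N: "N \<in> carrier_mat n n"
  shows "N * neumann n N m = neumann n N m * N"
proof (induction m)
  case 0 then show ?case using N by auto
next
  case (Suc m)
  have G: "neumann n N m \<in> carrier_mat n n" using N by simp
  have NG: "N * neumann n N m \<in> carrier_mat n n" using N G by simp
  have "N * neumann n N (Suc m) = N * 1\<^sub>m n - N * (N * neumann n N m)"
    using mult_minus_distrib_mat[OF N one_carrier_mat NG] by simp
  then have "N * neumann n N (Suc m) = N - N * (N * neumann n N m)" using N by simp
  also have "N * (N * neumann n N m) = (N * neumann n N m) * N"
    by (simp add: assoc_mult_mat[OF N G N, symmetric] Suc.IH)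
  also have "N - (N * neumann n N m) * N = neumann n N (Suc m) * N"
    using minus_mult_distrib_mat[OF one_carrier_mat NG N] N by simp
  finally show ?case .
qed

lemma neumann_right:
  assumes N: "N \<in> carrier_mat n n"
  shows "(1\<^sub>m n + N) * neumann n N m = 1\<^sub>m n - neg_pow n N m"
proof (induction m)
  case 0 then show ?case using N by (intro eq_matI) auto
next
  case (Suc m)
  have G: "neumann n N m \<in> carrier_mat n n" using N by simp
  have Q: "neg_pow n N m \<in> carrier_mat n n" using N by simp
  have NG: "N * neumann n N m \<in> carrier_mat n n" using N G by simp
  have IN: "1\<^sub>m n + N \<in> carrier_mat n n" using N by simp
  have "(1\<^sub>m n + N) * neumann n N (Suc m) = (1\<^sub>m n + N) - (1\<^sub>m n + N) * (N * neumann n N m)"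
    using mult_minus_distrib_mat[OF IN one_carrier_mat NG] N by simp
  also have "(1\<^sub>m n + N) * (N * neumann n N m) = N * ((1\<^sub>m n + N) * neumann n N m)"
  proof -
    have "(1\<^sub>m n + N) * (N * neumann n N m) = N * neumann n N m + N * (N * neumann n N m)"
      using add_mult_distrib_mat[OF one_carrier_mat N NG] NG by simp
    moreover have "N * ((1\<^sub>m n + N) * neumann n N m) = N * neumann n N m + N * (N * neumann n N m)"
      using add_mult_distrib_mat[OF one_carrier_mat N G] mult_add_distrib_mat[OF N G] N G
      by (simp add: assoc_mult_mat[OF N N G])
    ultimately show ?thesis by simp
  qed
  also have "\<dots> = N - N * neg_pow n N m"
    using Suc.IH mult_minus_distrib_mat[OF N one_carrier_mat Q] N by simp
  finally show ?case using N Q by (intro eq_matI) auto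
qed

lemma neumann_left:
  assumes N: "N \<in> carrier_mat n n"
  shows "neumann n N m * (1\<^sub>m n + N) = 1\<^sub>m n - neg_pow n N m"
proof -
  have G: "neumann n N m \<in> carrier_mat n n" using N by simp
  have "neumann n N m * (1\<^sub>m n + N) = neumann n N m + neumann n N m * N"
    using mult_add_distrib_mat[OF G one_carrier_mat N] G by simp
  also have "\<dots> = neumann n N m + N * neumann n N m" using neumann_comm[OF N] by simp
  also have "\<dots> = (1\<^sub>m n + N) * neumann n N m"
    using add_mult_distrib_mat[OF one_carrier_mat N G] G by simp
  finally show ?thesis using neumann_right[OF N] by simp
qed

lemma inv_mat_eq:
  assumes "A \<in> carrier_mat n n" "B \<in> carrier_mat n n" "A * B = 1\<^sub>m n" "B * A = 1\<^sub>m n"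
  shows "inv_mat n A = B"
  unfolding inv_mat_def
proof (rule the_equality)
  fix C assume C: "C \<in> carrier_mat n n \<and> A * C = 1\<^sub>m n \<and> C * A = 1\<^sub>m n"
  then have Cc: "C \<in> carrier_mat n n" and CA: "C * A = 1\<^sub>m n" by simp_all
  have "C = C * (A * B)" using assms(3) Cc by simp
  also have "\<dots> = (C * A) * B" using assoc_mult_mat[OF Cc assms(1,2)] by simp
  also have "\<dots> = B" using assms(2) CA by simp
  finally show "C = B" .
qed (use assms in auto)

definition Minv :: "nat \<Rightarrow> nat \<Rightarrow> (nat \<Rightarrow> nat \<Rightarrow> nat \<Rightarrow> complex) \<Rightarrow> complex mat" where
  "Minv n k Y = inv_mat n (Mk n k Y)"

lemma Minv_eq_neumann: "Minv n k Y = neumann n (strict_part n k Y) n"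
  unfolding Minv_def Mk_eq_one_plus_strict
  using neg_pow_nilpotent[OF strictly_triangular_strict_part]
  by (intro inv_mat_eq) (auto simp: neumann_right neumann_left)

lemma Minv_carrier [simp]: "Minv n k Y \<in> carrier_mat n n"
  by (simp add: Minv_eq_neumann)

lemma Minv_dim [simp]: "dim_row (Minv n k Y) = n" "dim_col (Minv n k Y) = n"
  using Minv_carrier[of n k Y] by (simp_all only: carrier_mat_def mem_Collect_eq)

lemma Mk_Minv: "Mk n k Y * Minv n k Y = 1\<^sub>m n"
  using neg_pow_nilpotent[OF strictly_triangular_strict_part, of n k Y]
  by (simp add: Minv_eq_neumann Mk_eq_one_plus_strict neumann_right)

lemma Minv_Mk: "Minv n k Y * Mk n k Y = 1\<^sub>m n"
  using neg_pow_nilpotent[OF strictly_triangular_strict_part, of n k Y]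
  by (simp add: Minv_eq_neumann Mk_eq_one_plus_strict neumann_left)

text \<open>Derivative of the inverse along the line Z + t W: it is -M^{-1} dN M^{-1}.  The Neumann
  series shows that the inverse is differentiable; the formula follows from M M^{-1} = 1.\<close>

definition shifted :: "(nat \<Rightarrow> nat \<Rightarrow> nat \<Rightarrow> complex) \<Rightarrow> (nat \<Rightarrow> nat \<Rightarrow> nat \<Rightarrow> complex)
    \<Rightarrow> complex \<Rightarrow> (nat \<Rightarrow> nat \<Rightarrow> nat \<Rightarrow> complex)" where
  "shifted Z W t = (\<lambda>k i j. Z k i j + t * W k i j)"

lemma shifted_0 [simp]: "shifted Z W 0 = Z"
  by (simp add: shifted_def)

lemma strict_part_shifted: "strict_part n k (shifted Z W t) = strict_part n k Z + t \<cdot>\<^sub>m strict_part n k W"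
  by (intro eq_matI) (auto simp: strict_part_def shifted_def)

lemma neumann_differentiable:
  assumes "N0 \<in> carrier_mat n n" "N1 \<in> carrier_mat n n"
  shows "\<exists>D \<in> carrier_mat n n. mat_deriv n (\<lambda>t. neumann n (N0 + t \<cdot>\<^sub>m N1) m) D"
proof (induction m)
  case 0
  then show ?case by (intro bexI[of _ "0\<^sub>m n n"]) (auto simp: mat_deriv_const)
next
  case (Suc m)
  then obtain D where D: "D \<in> carrier_mat n n" "mat_deriv n (\<lambda>t. neumann n (N0 + t \<cdot>\<^sub>m N1) m) D"
    by auto
  let ?D' = "0\<^sub>m n n - (N1 * neumann n (N0 + 0 \<cdot>\<^sub>m N1) m + (N0 + 0 \<cdot>\<^sub>m N1) * D)"
  have "mat_deriv n (\<lambda>t. 1\<^sub>m n - (N0 + t \<cdot>\<^sub>m N1) * neumann n (N0 + t \<cdot>\<^sub>m N1) m) ?D'"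
    using assms D by (intro mat_deriv_diff mat_deriv_const mat_deriv_mult mat_deriv_affine) auto
  then show ?case using assms D by (intro bexI[of _ ?D']) auto
qed

definition Minv_deriv :: "nat \<Rightarrow> nat \<Rightarrow> (nat \<Rightarrow> nat \<Rightarrow> nat \<Rightarrow> complex)
    \<Rightarrow> (nat \<Rightarrow> nat \<Rightarrow> nat \<Rightarrow> complex) \<Rightarrow> complex mat" where
  "Minv_deriv n k Z W = - (Minv n k Z * strict_part n k W * Minv n k Z)"

lemma Minv_deriv_carrier [simp]: "Minv_deriv n k Z W \<in> carrier_mat n n"
  by (simp add: Minv_deriv_def)

lemma Minv_deriv_dim [simp]: "dim_row (Minv_deriv n k Z W) = n" "dim_col (Minv_deriv n k Z W) = n"
  by (simp_all add: Minv_deriv_def)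

lemma Minv_has_deriv: "mat_deriv n (\<lambda>t. Minv n k (shifted Z W t)) (Minv_deriv n k Z W)"
proof -
  let ?N0 = "strict_part n k Z" and ?N1 = "strict_part n k W"
  let ?X = "Minv n k Z" and ?M = "Mk n k Z"
  obtain D where D: "D \<in> carrier_mat n n" "mat_deriv n (\<lambda>t. neumann n (?N0 + t \<cdot>\<^sub>m ?N1) n) D"
    using neumann_differentiable[of ?N0 n ?N1 n] by auto
  have "(\<lambda>t. Minv n k (shifted Z W t)) = (\<lambda>t. neumann n (?N0 + t \<cdot>\<^sub>m ?N1) n)"
    by (simp add: Minv_eq_neumann strict_part_shifted)
  then have dX: "mat_deriv n (\<lambda>t. Minv n k (shifted Z W t)) D" using D by simp
  have M: "\<And>t. Mk n k (shifted Z W t) = ?M + t \<cdot>\<^sub>m ?N1"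
    by (intro eq_matI) (auto simp: Mk_def strict_part_def shifted_def)
  have "mat_deriv n (\<lambda>t. Mk n k (shifted Z W t) * Minv n k (shifted Z W t)) (?N1 * ?X + ?M * D)"
    using mat_deriv_mult[OF mat_deriv_affine[of ?M n ?N1] dX] D unfolding M by auto
  moreover have "mat_deriv n (\<lambda>t. Mk n k (shifted Z W t) * Minv n k (shifted Z W t)) (0\<^sub>m n n)"
    unfolding Mk_Minv by (rule mat_deriv_const)
  ultimately have zero: "?N1 * ?X + ?M * D = 0\<^sub>m n n"
    using D by (intro mat_deriv_unique) auto
  have X: "?X \<in> carrier_mat n n" and N1: "?N1 \<in> carrier_mat n n" and Mc: "?M \<in> carrier_mat n n"
    by simp_all
  have "?X * (?N1 * ?X + ?M * D) = ?X * (?N1 * ?X) + ?X * (?M * D)"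
    using D X by (intro mult_add_distrib_mat[OF X]) auto
  also have "?X * (?N1 * ?X) = ?X * ?N1 * ?X" using assoc_mult_mat[OF X N1 X] by simp
  also have "?X * (?M * D) = D" using assoc_mult_mat[OF X Mc D(1)] D(1) by (simp add: Minv_Mk)
  finally have sum_zero: "?X * ?N1 * ?X + D = 0\<^sub>m n n" using zero X by simp
  have "D = - (?X * ?N1 * ?X)"
  proof (rule eq_matI)
    fix i j assume "i < dim_row (- (?X * ?N1 * ?X))" "j < dim_col (- (?X * ?N1 * ?X))"
    then have ij: "i < n" "j < n" by simp_all
    have "(?X * ?N1 * ?X + D) $$ (i,j) = 0" using sum_zero ij by simp
    then show "D $$ (i,j) = (- (?X * ?N1 * ?X)) $$ (i,j)"
      using D(1) ij by (simp add: eq_neg_iff_add_eq_0 add.commute)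
  qed (use D(1) in auto)
  then show ?thesis using dX by (simp add: Minv_deriv_def)
qed

definition prod_inv :: "nat \<Rightarrow> (nat \<Rightarrow> nat \<Rightarrow> nat \<Rightarrow> complex) \<Rightarrow> nat list \<Rightarrow> complex mat \<Rightarrow> complex mat" where
  "prod_inv n Y L B = foldr (\<lambda>k A. Minv n k Y * A) L B"

lemma prod_inv_Nil [simp]: "prod_inv n Y [] B = B"
  by (simp add: prod_inv_def)

lemma prod_inv_Cons [simp]: "prod_inv n Y (k # L) B = Minv n k Y * prod_inv n Y L B"
  by (simp add: prod_inv_def)

lemma prod_inv_append: "prod_inv n Y (L1 @ L2) B = prod_inv n Y L1 (prod_inv n Y L2 B)"
  by (simp add: prod_inv_def)

lemma prod_inv_carrier [simp]: "B \<in> carrier_mat n n \<Longrightarrow> prod_inv n Y L B \<in> carrier_mat n n"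
  by (induction L) auto

lemma prod_inv_dim [simp]:
  "B \<in> carrier_mat n n \<Longrightarrow> dim_row (prod_inv n Y L B) = n \<and> dim_col (prod_inv n Y L B) = n"
  using prod_inv_carrier[of B n Y L] by (simp only: carrier_mat_def mem_Collect_eq)

lemma prod_inv_mult:
  assumes "B \<in> carrier_mat n n" "C \<in> carrier_mat n n"
  shows "prod_inv n Y L B * C = prod_inv n Y L (B * C)"
proof (induction L)
  case (Cons k L)
  have "Minv n k Y * prod_inv n Y L B * C = Minv n k Y * (prod_inv n Y L B * C)"
    using assms by (intro assoc_mult_mat[of _ n n _ n _ n]) auto
  then show ?case using Cons by simp
qed simp

lemma prod_inv_zero: "prod_inv n Z L (0\<^sub>m n n) = 0\<^sub>m n n"
  by (induction L) auto

lemma Psi_eq_prod_inv: "Psi n K Y = prod_inv n Y [1..<K+1] (1\<^sub>m n)"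
  by (simp add: Psi_def prod_inv_def Minv_def)

text \<open>prod_inv_deriv L B0 B' is the derivative of prod_inv L (B t) when B 0 = B0, B' = B'(0).\<close>

fun prod_inv_deriv :: "nat \<Rightarrow> (nat \<Rightarrow> nat \<Rightarrow> nat \<Rightarrow> complex) \<Rightarrow> (nat \<Rightarrow> nat \<Rightarrow> nat \<Rightarrow> complex)
    \<Rightarrow> nat list \<Rightarrow> complex mat \<Rightarrow> complex mat \<Rightarrow> complex mat" where
  "prod_inv_deriv n Z W [] B0 B' = B'"
| "prod_inv_deriv n Z W (k # L) B0 B' =
     Minv_deriv n k Z W * prod_inv n Z L B0 + Minv n k Z * prod_inv_deriv n Z W L B0 B'"

lemma prod_inv_deriv_carrier [simp]:
  "B0 \<in> carrier_mat n n \<Longrightarrow> B' \<in> carrier_mat n n \<Longrightarrow> prod_inv_deriv n Z W L B0 B' \<in> carrier_mat n n"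
  by (induction L) auto

lemma prod_inv_deriv_dim [simp]:
  "B0 \<in> carrier_mat n n \<Longrightarrow> B' \<in> carrier_mat n n \<Longrightarrow>
   dim_row (prod_inv_deriv n Z W L B0 B') = n \<and> dim_col (prod_inv_deriv n Z W L B0 B') = n"
  using prod_inv_deriv_carrier[of B0 n B' Z W L] by (simp only: carrier_mat_def mem_Collect_eq)

lemma prod_inv_has_deriv:
  assumes "\<And>t. B t \<in> carrier_mat n n" "B' \<in> carrier_mat n n" "mat_deriv n B B'"
  shows "mat_deriv n (\<lambda>t. prod_inv n (shifted Z W t) L (B t)) (prod_inv_deriv n Z W L (B 0) B')"
proof (induction L)
  case (Cons k L)
  have "mat_deriv n (\<lambda>t. Minv n k (shifted Z W t) * prod_inv n (shifted Z W t) L (B t))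
     (Minv_deriv n k Z W * prod_inv n (shifted Z W 0) L (B 0)
        + Minv n k (shifted Z W 0) * prod_inv_deriv n Z W L (B 0) B')"
    using assms Cons by (intro mat_deriv_mult Minv_has_deriv) auto
  then show ?case by simp
qed (use assms in simp)

lemma prod_inv_deriv_append:
  "prod_inv_deriv n Z W (L1 @ L2) B0 B' = prod_inv_deriv n Z W L1 (prod_inv n Z L2 B0) (prod_inv_deriv n Z W L2 B0 B')"
  by (induction L1) (simp_all add: prod_inv_append)

lemma prod_inv_deriv_inactive:
  assumes "\<forall>k\<in>set L. strict_part n k W = 0\<^sub>m n n" "B' \<in> carrier_mat n n" "B0 \<in> carrier_mat n n"
  shows "prod_inv_deriv n Z W L B0 B' = prod_inv n Z L B'"
  using assms(1)
proof (induction L)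
  case (Cons k L)
  then have "Minv_deriv n k Z W = 0\<^sub>m n n" by (intro eq_matI) (auto simp: Minv_deriv_def)
  then show ?case using Cons assms by simp
qed simp

definition Phi_diff :: "nat \<Rightarrow> nat \<Rightarrow> (nat \<Rightarrow> nat \<Rightarrow> nat \<Rightarrow> complex)
    \<Rightarrow> (nat \<Rightarrow> nat \<Rightarrow> nat \<Rightarrow> complex) \<Rightarrow> complex vec" where
  "Phi_diff n K Z W = row (prod_inv_deriv n Z W [1..<K+1] (1\<^sub>m n) (0\<^sub>m n n)) (n - 1)"

lemma Phi_diff_has_deriv:
  assumes "1 \<le> n" "m < n"
  shows "((\<lambda>t::complex. Phi n K (\<lambda>k i j. Z k i j + t * W k i j) $ m)
           has_field_derivative (Phi_diff n K Z W $ m)) (at 0)"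
proof -
  have d: "mat_deriv n (\<lambda>t. prod_inv n (shifted Z W t) [1..<K+1] (1\<^sub>m n))
             (prod_inv_deriv n Z W [1..<K+1] (1\<^sub>m n) (0\<^sub>m n n))"
    using prod_inv_has_deriv[of "\<lambda>t. 1\<^sub>m n" n "0\<^sub>m n n" Z W "[1..<K+1]"] by (simp add: mat_deriv_const)
  have l: "n - 1 < n" using assms by simp
  have "(\<lambda>t::complex. Phi n K (\<lambda>k i j. Z k i j + t * W k i j) $ m)
        = (\<lambda>t. prod_inv n (shifted Z W t) [1..<K+1] (1\<^sub>m n) $$ (n - 1, m))"
    using assms l by (intro ext) (simp add: Phi_def Psi_eq_prod_inv shifted_def)
  moreover have "Phi_diff n K Z W $ m = prod_inv_deriv n Z W [1..<K+1] (1\<^sub>m n) (0\<^sub>m n n) $$ (n - 1, m)"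
    using assms l unfolding Phi_diff_def by (intro index_row) auto
  ultimately show ?thesis using d l assms unfolding mat_deriv_def by simp
qed

lemma Phi_diff_is_differential:
  assumes "1 \<le> n"
  shows "is_differential n K Z (Phi_diff n K Z)"
  unfolding is_differential_def
proof (intro ballI conjI allI impI)
  fix W show "Phi_diff n K Z W \<in> carrier_vec n"
    using assms unfolding Phi_diff_def by (intro row_carrier_vec[of _ n _ n]) auto
next
  fix W m assume "m < n"
  then show "((\<lambda>t::complex. Phi n K (\<lambda>k i j. Z k i j + t * W k i j) $ m)
               has_field_derivative (Phi_diff n K Z W $ m)) (at 0)"
    using Phi_diff_has_deriv assms by blast
qed

lemma differential_eq_Phi_diff:
  assumes "1 \<le> n" "is_differential n K Z D" "W \<in> dirs n K"
  shows "D W = Phi_diff n K Z W"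
proof -
  have c1: "D W \<in> carrier_vec n" using assms unfolding is_differential_def by auto
  have c2: "Phi_diff n K Z W \<in> carrier_vec n"
    using Phi_diff_is_differential[OF assms(1)] assms(3) unfolding is_differential_def by auto
  show ?thesis
  proof (rule eq_vecI)
    fix m assume "m < dim_vec (Phi_diff n K Z W)"
    then have m: "m < n" using c2 by auto
    show "D W $ m = Phi_diff n K Z W $ m"
      using assms m Phi_diff_has_deriv[OF assms(1) m] unfolding is_differential_def
      by (blast intro: DERIV_unique)
  qed (use c1 c2 in auto)
qed

lemma submersion_iff_Phi_diff_onto:
  assumes "1 \<le> n"
  shows "submersion_at n K Z \<longleftrightarrow> (\<forall>v\<in>carrier_vec n. \<exists>W\<in>dirs n K. Phi_diff n K Z W = v)"
proof
  assume "submersion_at n K Z"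
  then obtain D where D: "is_differential n K Z D" "D ` dirs n K = carrier_vec n"
    unfolding submersion_at_def by auto
  show "\<forall>v\<in>carrier_vec n. \<exists>W\<in>dirs n K. Phi_diff n K Z W = v"
  proof
    fix v :: "complex vec" assume "v \<in> carrier_vec n"
    then obtain W where "W \<in> dirs n K" "D W = v" using D(2) by (metis imageE)
    then show "\<exists>W\<in>dirs n K. Phi_diff n K Z W = v"
      using differential_eq_Phi_diff[OF assms D(1)] by metis
  qed
next
  assume onto: "\<forall>v\<in>carrier_vec n. \<exists>W\<in>dirs n K. Phi_diff n K Z W = v"
  have D: "is_differential n K Z (Phi_diff n K Z)" using Phi_diff_is_differential[OF assms] .
  then have "Phi_diff n K Z ` dirs n K = carrier_vec n"
    using onto unfolding is_differential_def by (auto simp: image_iff)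
  then show "submersion_at n K Z" unfolding submersion_at_def using D by blast
qed

definition vm :: "nat \<Rightarrow> complex vec \<Rightarrow> complex mat \<Rightarrow> complex vec" where
  "vm n x A = vec n (\<lambda>j. \<Sum>i<n. x $ i * A $$ (i,j))"

lemma vm_carrier [simp]: "vm n x A \<in> carrier_vec n" "dim_vec (vm n x A) = n"
  by (auto simp: vm_def)

lemma vm_index [simp]: "j < n \<Longrightarrow> vm n x A $ j = (\<Sum>i<n. x $ i * A $$ (i,j))"
  by (simp add: vm_def)

lemma row_mult_vm:
  assumes "A \<in> carrier_mat n n" "B \<in> carrier_mat n n" "i < n"
  shows "row (A * B) i = vm n (row A i) B"
  using assms by (intro eq_vecI) (auto simp: row_col_sum)

lemma vm_vm:
  assumes "A \<in> carrier_mat n n" "B \<in> carrier_mat n n"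
  shows "vm n (vm n x A) B = vm n x (A * B)"
proof (rule eq_vecI)
  fix j assume "j < dim_vec (vm n x (A * B))"
  then have j: "j < n" by simp
  have "vm n (vm n x A) B $ j = (\<Sum>l<n. (\<Sum>i<n. x $ i * A $$ (i,l)) * B $$ (l,j))" using j by simp
  also have "\<dots> = (\<Sum>i<n. x $ i * (\<Sum>l<n. A $$ (i,l) * B $$ (l,j)))"
    unfolding sum_distrib_left sum_distrib_right mult.assoc by (rule sum.swap)
  also have "\<dots> = vm n x (A * B) $ j" using assms j by (simp add: row_col_sum)
  finally show "vm n (vm n x A) B $ j = vm n x (A * B) $ j" .
qed auto

lemma vm_one: "x \<in> carrier_vec n \<Longrightarrow> vm n x (1\<^sub>m n) = x"
  by (intro eq_vecI) (auto simp: if_distrib cong: if_cong)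

lemma vm_add_vec: "x \<in> carrier_vec n \<Longrightarrow> y \<in> carrier_vec n \<Longrightarrow> vm n (x + y) A = vm n x A + vm n y A"
  by (intro eq_vecI) (auto simp: sum.distrib distrib_right)

lemma vm_uminus_vec: "x \<in> carrier_vec n \<Longrightarrow> vm n (- x) A = - vm n x A"
  by (intro eq_vecI) (auto simp: sum_negf)

lemma vm_index_single_term:
  assumes "j < n" "q < n" "\<And>i. i < n \<Longrightarrow> i \<noteq> q \<Longrightarrow> x $ i * A $$ (i,j) = 0"
  shows "vm n x A $ j = x $ q * A $$ (q,j)"
proof -
  have "(\<Sum>i<n. x $ i * A $$ (i,j)) = (\<Sum>i<n. if i = q then x $ q * A $$ (q,j) else 0)"
    by (rule sum.cong) (use assms(3) in auto)
  then show ?thesis using assms(1,2) by simp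
qed

lemma vm_unit_vec:
  assumes "A \<in> carrier_mat n n" "l < n"
  shows "vm n (unit_vec n l) A = row A l"
proof (rule eq_vecI)
  fix j assume "j < dim_vec (row A l)"
  then have j: "j < n" using assms by simp
  show "vm n (unit_vec n l) A $ j = row A l $ j"
    using assms j by (subst vm_index_single_term[of j n l]) auto
qed (use assms in simp)

definition unit_row :: "nat \<Rightarrow> nat \<Rightarrow> complex mat \<Rightarrow> bool" where
  "unit_row n l A \<longleftrightarrow> (\<forall>j<n. A $$ (l,j) = (if j = l then 1 else 0))"

definition unit_col :: "nat \<Rightarrow> nat \<Rightarrow> complex mat \<Rightarrow> bool" where
  "unit_col n l A \<longleftrightarrow> (\<forall>i<n. A $$ (i,l) = (if i = l then 1 else 0))"

lemma unit_row_mult: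
  assumes "A \<in> carrier_mat n n" "B \<in> carrier_mat n n" "l < n" "j < n" "unit_row n l A"
  shows "(A * B) $$ (l,j) = B $$ (l,j)"
proof -
  have "(A * B) $$ (l,j) = (\<Sum>i<n. A $$ (l,i) * B $$ (i,j))" using assms by (intro index_mult_sq)
  also have "\<dots> = (\<Sum>i<n. if i = l then B $$ (i,j) else 0)"
    using assms(5) unfolding unit_row_def by (intro sum.cong) auto
  finally show ?thesis using assms(3) by simp
qed

lemma unit_col_mult:
  assumes "A \<in> carrier_mat n n" "B \<in> carrier_mat n n" "l < n" "i < n" "unit_col n l B"
  shows "(A * B) $$ (i,l) = A $$ (i,l)"
proof -
  have "(A * B) $$ (i,l) = (\<Sum>j<n. A $$ (i,j) * B $$ (j,l))" using assms by (intro index_mult_sq)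
  also have "\<dots> = (\<Sum>j<n. if j = l then A $$ (i,j) else 0)"
    using assms(5) unfolding unit_col_def by (intro sum.cong) auto
  finally show ?thesis using assms(3) by simp
qed

lemma unit_row_right_inverse:
  assumes "A \<in> carrier_mat n n" "B \<in> carrier_mat n n" "l < n" "A * B = 1\<^sub>m n" "unit_row n l A"
  shows "unit_row n l B"
  unfolding unit_row_def
proof (intro allI impI)
  fix j assume j: "j < n"
  have "(A * B) $$ (l,j) = B $$ (l,j)" using assms j by (intro unit_row_mult)
  then show "B $$ (l,j) = (if j = l then 1 else 0)" using assms(3,4) j by auto
qed

lemma unit_col_left_inverse:
  assumes "A \<in> carrier_mat n n" "B \<in> carrier_mat n n" "l < n" "A * B = 1\<^sub>m n" "unit_col n l B"
  shows "unit_col n l A"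
  unfolding unit_col_def
proof (intro allI impI)
  fix i assume i: "i < n"
  have "(A * B) $$ (i,l) = A $$ (i,l)" using assms i by (intro unit_col_mult)
  then show "A $$ (i,l) = (if i = l then 1 else 0)" using assms(3,4) i by auto
qed

lemma vm_unit_col:
  assumes "unit_col n l A" "l < n"
  shows "vm n x A $ l = x $ l"
  using assms by (subst vm_index_single_term[of l n l]) (auto simp: unit_col_def)

lemma unit_row_Mk_even: "even k \<Longrightarrow> unit_row n (n - 1) (Mk n k Z)"
  unfolding unit_row_def Mk_def by auto

lemma unit_col_Mk_odd: "odd k \<Longrightarrow> unit_col n (n - 1) (Mk n k Z)"
  unfolding unit_col_def Mk_def by auto

lemma unit_row_Minv_even: "1 \<le> n \<Longrightarrow> even k \<Longrightarrow> unit_row n (n - 1) (Minv n k Z)"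
  by (rule unit_row_right_inverse[OF Mk_carrier Minv_carrier _ Mk_Minv unit_row_Mk_even]) auto

lemma unit_col_Minv_odd: "1 \<le> n \<Longrightarrow> odd k \<Longrightarrow> unit_col n (n - 1) (Minv n k Z)"
  by (rule unit_col_left_inverse[OF Minv_carrier Mk_carrier _ Minv_Mk unit_col_Mk_odd]) auto

definition fixes_last :: "nat \<Rightarrow> complex mat \<Rightarrow> bool" where
  "fixes_last n A \<longleftrightarrow> unit_row n (n - 1) A \<and> unit_col n (n - 1) A"

lemma fixes_last_one: "fixes_last n (1\<^sub>m n)"
  unfolding fixes_last_def unit_row_def unit_col_def by auto

lemma fixes_last_mult:
  assumes "1 \<le> n" "A \<in> carrier_mat n n" "B \<in> carrier_mat n n" "fixes_last n A" "fixes_last n B"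
  shows "fixes_last n (A * B)"
  using assms unit_row_mult[of A n B "n - 1"] unit_col_mult[of A n B "n - 1"]
  unfolding fixes_last_def unit_row_def unit_col_def by auto

lemma fixes_last_prod_inv:
  assumes "1 \<le> n" "B \<in> carrier_mat n n" "fixes_last n B" "\<forall>k\<in>set L. fixes_last n (Minv n k Z)"
  shows "fixes_last n (prod_inv n Z L B)"
  using assms(4) by (induction L) (use assms in \<open>auto intro: fixes_last_mult\<close>)

definition last_line_trivial :: "nat \<Rightarrow> (nat \<Rightarrow> nat \<Rightarrow> nat \<Rightarrow> complex) \<Rightarrow> nat \<Rightarrow> bool" where
  "last_line_trivial n Z k \<longleftrightarrow>
     (odd k \<longrightarrow> (\<forall>j. 1 \<le> j \<and> j \<le> n - 1 \<longrightarrow> Z k n j = 0)) \<and>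
     (even k \<longrightarrow> (\<forall>i. 1 \<le> i \<and> i \<le> n - 1 \<longrightarrow> Z k i n = 0))"

lemma S_set_iff: "Z \<in> S_set n K \<longleftrightarrow> (\<forall>k. 1 \<le> k \<and> k < K \<longrightarrow> last_line_trivial n Z k)"
  unfolding S_set_def last_line_trivial_def by auto

lemma fixes_last_Minv:
  assumes "2 \<le> n" "last_line_trivial n Z k"
  shows "fixes_last n (Minv n k Z)"
proof -
  have M: "fixes_last n (Mk n k Z)"
    using assms unfolding fixes_last_def unit_row_def unit_col_def Mk_def last_line_trivial_def
    by auto
  have l: "n - 1 < n" using assms(1) by simp
  show ?thesis
    using unit_row_right_inverse[OF Mk_carrier Minv_carrier l Mk_Minv]
      unit_col_left_inverse[OF Minv_carrier Mk_carrier l Minv_Mk] M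
    unfolding fixes_last_def by blast
qed

text \<open>Necessity.  If the factors before K fix e_n, the (n,n) entry of the derivative of Psi_K
  times M_K vanishes: each factor k < K contributes -(N_k)_{nn} = 0, and so does M_K.\<close>

lemma Minv_deriv_last_entry:
  assumes "1 \<le> n" "fixes_last n (Minv n k Z)"
  shows "Minv_deriv n k Z W $$ (n - 1, n - 1) = 0"
proof -
  let ?X = "Minv n k Z" and ?N = "strict_part n k W"
  have l: "n - 1 < n" using assms by simp
  have "(?X * ?N * ?X) $$ (n - 1, n - 1) = (?X * ?N) $$ (n - 1, n - 1)"
    using assms l by (intro unit_col_mult[of _ n]) (auto simp: fixes_last_def)
  also have "\<dots> = ?N $$ (n - 1, n - 1)"
    using assms l by (intro unit_row_mult[of _ n]) (auto simp: fixes_last_def)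
  also have "\<dots> = 0" using l by (simp add: strict_part_def)
  finally show ?thesis using l by (simp add: Minv_deriv_def)
qed

lemma prod_inv_deriv_last_entry:
  assumes "1 \<le> n" "B0 \<in> carrier_mat n n" "B' \<in> carrier_mat n n" "C \<in> carrier_mat n n"
    and "fixes_last n (B0 * C)" "\<forall>k\<in>set L. fixes_last n (Minv n k Z)"
  shows "(prod_inv_deriv n Z W L B0 B' * C) $$ (n - 1, n - 1) = (B' * C) $$ (n - 1, n - 1)"
  using assms(6)
proof (induction L)
  case (Cons k L)
  let ?l = "n - 1" and ?X = "Minv n k Z" and ?D = "prod_inv_deriv n Z W L B0 B'"
  let ?P = "prod_inv n Z L (B0 * C)"
  have l: "?l < n" using assms by simp
  have c: "prod_inv n Z L B0 \<in> carrier_mat n n" "?D \<in> carrier_mat n n" using assms by auto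
  have fk: "fixes_last n ?X" and fP: "fixes_last n ?P"
    using assms Cons by (auto intro: fixes_last_prod_inv)
  have "prod_inv_deriv n Z W (k # L) B0 B' * C
        = Minv_deriv n k Z W * prod_inv n Z L B0 * C + ?X * ?D * C"
    using assms c by (simp add: add_mult_distrib_mat[of _ n n])
  also have "\<dots> = Minv_deriv n k Z W * ?P + ?X * (?D * C)"
    using assms c by (simp add: assoc_mult_mat[of _ n n _ n _ n] prod_inv_mult)
  finally have "(prod_inv_deriv n Z W (k # L) B0 B' * C) $$ (?l, ?l)
      = (Minv_deriv n k Z W * ?P) $$ (?l, ?l) + (?X * (?D * C)) $$ (?l, ?l)"
    using l assms c by simp
  moreover have "(Minv_deriv n k Z W * ?P) $$ (?l, ?l) = Minv_deriv n k Z W $$ (?l, ?l)"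
    using assms l fP by (intro unit_col_mult[of _ n]) (auto simp: fixes_last_def)
  moreover have "(?X * (?D * C)) $$ (?l, ?l) = (?D * C) $$ (?l, ?l)"
    using assms l fk c by (intro unit_row_mult[of _ n]) (auto simp: fixes_last_def)
  ultimately show ?case using Cons Minv_deriv_last_entry[OF assms(1) fk] by simp
qed simp

lemma last_factor_deriv_entry:
  assumes "1 \<le> n"
  shows "(Minv_deriv n K Z W * Mk n K Z) $$ (n - 1, n - 1) = 0"
proof -
  let ?X = "Minv n K Z" and ?N = "strict_part n K W" and ?M = "Mk n K Z"
  have l: "n - 1 < n" using assms by simp
  have "Minv_deriv n K Z W * ?M = - (?X * ?N * ?X * ?M)" unfolding Minv_deriv_def by simp
  also have "?X * ?N * ?X * ?M = ?X * ?N * (?X * ?M)"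
    by (rule assoc_mult_mat[of _ n n]) auto
  also have "\<dots> = ?X * ?N" by (simp add: Minv_Mk)
  finally have e: "Minv_deriv n K Z W * ?M = - (?X * ?N)" .
  have "(?X * ?N) $$ (n - 1, n - 1) = 0"
  proof (cases "even K")
    case True
    then have "(?X * ?N) $$ (n - 1, n - 1) = ?N $$ (n - 1, n - 1)"
      using l unit_row_Minv_even[OF assms] by (intro unit_row_mult) auto
    then show ?thesis using l by (simp add: strict_part_def)
  next
    case False
    then show ?thesis
      using l by (subst index_mult_sq[of _ n]) (auto simp: strict_part_def intro!: sum.neutral)
  qed
  then show ?thesis using e l by simp
qed

lemma Phi_diff_annihilated:
  assumes n: "2 \<le> n" and K: "1 \<le> K" and S: "Z \<in> S_set n K"
  shows "vm n (Phi_diff n K Z W) (Mk n K Z) $ (n - 1) = 0"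
proof -
  have n1: "1 \<le> n" and l: "n - 1 < n" using n by auto
  have prefix: "\<forall>k\<in>set [1..<K]. fixes_last n (Minv n k Z)"
    using S n by (auto simp: S_set_iff intro: fixes_last_Minv)
  have split: "[1..<K+1] = [1..<K] @ [K]" using K by simp
  have last: "prod_inv_deriv n Z W [K] (1\<^sub>m n) (0\<^sub>m n n) = Minv_deriv n K Z W"
    and last_value: "prod_inv n Z [K] (1\<^sub>m n) = Minv n K Z" by simp_all
  have "vm n (Phi_diff n K Z W) (Mk n K Z) $ (n - 1)
        = (prod_inv_deriv n Z W [1..<K+1] (1\<^sub>m n) (0\<^sub>m n n) * Mk n K Z) $$ (n - 1, n - 1)"
    unfolding Phi_diff_def using l by (simp add: row_mult_vm[symmetric])
  also have "\<dots> = (Minv_deriv n K Z W * Mk n K Z) $$ (n - 1, n - 1)"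
    unfolding split prod_inv_deriv_append last last_value using prefix n1
    by (intro prod_inv_deriv_last_entry) (auto simp: Minv_Mk fixes_last_one)
  also have "\<dots> = 0" using last_factor_deriv_entry[OF n1] .
  finally show ?thesis .
qed

lemma unit_vec_not_reached:
  assumes "2 \<le> n" "1 \<le> K" "Z \<in> S_set n K"
  shows "\<not> (\<exists>W\<in>dirs n K. Phi_diff n K Z W = unit_vec n (n - 1))"
proof
  assume "\<exists>W\<in>dirs n K. Phi_diff n K Z W = unit_vec n (n - 1)"
  then obtain W where W: "Phi_diff n K Z W = unit_vec n (n - 1)" by blast
  have l: "n - 1 < n" using assms by simp
  have "vm n (unit_vec n (n - 1)) (Mk n K Z) $ (n - 1) = 1"
    using l by (simp add: vm_unit_vec Mk_def)
  then show False using Phi_diff_annihilated[OF assms, of W] W by simp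
qed

definition prefix_row :: "nat \<Rightarrow> (nat \<Rightarrow> nat \<Rightarrow> nat \<Rightarrow> complex) \<Rightarrow> nat \<Rightarrow> complex vec" where
  "prefix_row n Z k = row (prod_inv n Z [1..<Suc k] (1\<^sub>m n)) (n - 1)"

definition suffix_prod :: "nat \<Rightarrow> nat \<Rightarrow> (nat \<Rightarrow> nat \<Rightarrow> nat \<Rightarrow> complex) \<Rightarrow> nat \<Rightarrow> complex mat" where
  "suffix_prod n K Z k = prod_inv n Z [k..<K+1] (1\<^sub>m n)"

lemma suffix_prod_carrier [simp]: "suffix_prod n K Z k \<in> carrier_mat n n"
  by (simp add: suffix_prod_def)

lemma suffix_prod_Cons:
  assumes "k \<le> K"
  shows "suffix_prod n K Z k = Minv n k Z * suffix_prod n K Z (Suc k)"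
proof -
  have "[k..<K+1] = k # [Suc k..<K+1]" using assms by (simp add: upt_conv_Cons)
  then show ?thesis by (simp add: suffix_prod_def)
qed

lemma prod_inv_left_invertible: "\<exists>R\<in>carrier_mat n n. R * prod_inv n Z L (1\<^sub>m n) = 1\<^sub>m n"
proof (induction L)
  case (Cons k L)
  then obtain R where R: "R \<in> carrier_mat n n" "R * prod_inv n Z L (1\<^sub>m n) = 1\<^sub>m n" by auto
  let ?P = "prod_inv n Z L (1\<^sub>m n)"
  have P: "?P \<in> carrier_mat n n" by simp
  have "Mk n k Z * (Minv n k Z * ?P) = Mk n k Z * Minv n k Z * ?P"
    by (rule assoc_mult_mat[symmetric, of _ n n]) auto
  then have "Mk n k Z * (Minv n k Z * ?P) = ?P" by (simp add: Mk_Minv)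
  moreover have "R * Mk n k Z * (Minv n k Z * ?P) = R * (Mk n k Z * (Minv n k Z * ?P))"
    using R(1) by (intro assoc_mult_mat[of _ n n]) auto
  ultimately have "R * Mk n k Z * (Minv n k Z * ?P) = 1\<^sub>m n" using R by simp
  then show ?case using R by (intro bexI[of _ "R * Mk n k Z"]) auto
qed (auto intro!: bexI[of _ "1\<^sub>m n"])

lemma prefix_row_Suc:
  assumes "1 \<le> n"
  shows "prefix_row n Z (Suc k) = vm n (prefix_row n Z k) (Minv n (Suc k) Z)"
proof -
  have "prod_inv n Z [1..<Suc (Suc k)] (1\<^sub>m n) = prod_inv n Z [1..<Suc k] (1\<^sub>m n) * Minv n (Suc k) Z"
    by (simp add: prod_inv_append prod_inv_mult)
  then show ?thesis using assms unfolding prefix_row_def by (simp add: row_mult_vm)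
qed

lemma prefix_row_fixed:
  assumes "1 \<le> n" "\<And>j. 1 \<le> j \<Longrightarrow> j \<le> k \<Longrightarrow> fixes_last n (Minv n j Z)"
  shows "prefix_row n Z k = unit_vec n (n - 1)"
proof -
  have "fixes_last n (prod_inv n Z [1..<Suc k] (1\<^sub>m n))"
    using assms by (intro fixes_last_prod_inv) (auto simp: fixes_last_one)
  then have "unit_row n (n - 1) (prod_inv n Z [1..<Suc k] (1\<^sub>m n))" by (simp add: fixes_last_def)
  then show ?thesis using assms(1) unfolding prefix_row_def unit_row_def by (intro eq_vecI) auto
qed

lemma dirs_add:
  assumes "W1 \<in> dirs n K" "W2 \<in> dirs n K"
  shows "(\<lambda>k i j. W1 k i j + W2 k i j) \<in> dirs n K"
  unfolding dirs_def
proof (intro CollectI allI impI)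
  fix k i j assume "W1 k i j + W2 k i j \<noteq> 0"
  then have "W1 k i j \<noteq> 0 \<or> W2 k i j \<noteq> 0" by auto
  then show "(k, i, j) \<in> coords n K" using assms unfolding dirs_def by auto
qed

lemma Phi_diff_add:
  assumes "1 \<le> n"
  shows "Phi_diff n K Z (\<lambda>k i j. W1 k i j + W2 k i j) = Phi_diff n K Z W1 + Phi_diff n K Z W2"
proof -
  let ?W = "\<lambda>k i j. W1 k i j + W2 k i j"
  have XD: "Minv_deriv n k Z ?W = Minv_deriv n k Z W1 + Minv_deriv n k Z W2" for k
  proof -
    let ?X = "Minv n k Z" and ?N1 = "strict_part n k W1" and ?N2 = "strict_part n k W2"
    have "strict_part n k ?W = ?N1 + ?N2" by (intro eq_matI) (auto simp: strict_part_def)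
    moreover have "?X * (?N1 + ?N2) = ?X * ?N1 + ?X * ?N2"
      by (rule mult_add_distrib_mat[of _ n n]) auto
    moreover have "(?X * ?N1 + ?X * ?N2) * ?X = ?X * ?N1 * ?X + ?X * ?N2 * ?X"
      by (rule add_mult_distrib_mat[of _ n n]) auto
    ultimately have "?X * strict_part n k ?W * ?X = ?X * ?N1 * ?X + ?X * ?N2 * ?X" by simp
    then show ?thesis unfolding Minv_deriv_def by (intro eq_matI) auto
  qed
  have "prod_inv_deriv n Z ?W L B0 (0\<^sub>m n n) =
        prod_inv_deriv n Z W1 L B0 (0\<^sub>m n n) + prod_inv_deriv n Z W2 L B0 (0\<^sub>m n n)"
    if B0: "B0 \<in> carrier_mat n n" for L B0
  proof (induction L)
    case (Cons k L)
    let ?P = "prod_inv n Z L B0" and ?X = "Minv n k Z"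
    let ?E1 = "Minv_deriv n k Z W1" and ?E2 = "Minv_deriv n k Z W2"
    let ?D1 = "prod_inv_deriv n Z W1 L B0 (0\<^sub>m n n)" and ?D2 = "prod_inv_deriv n Z W2 L B0 (0\<^sub>m n n)"
    have c: "?P \<in> carrier_mat n n" "?D1 \<in> carrier_mat n n" "?D2 \<in> carrier_mat n n" using B0 by auto
    have "prod_inv_deriv n Z ?W (k # L) B0 (0\<^sub>m n n) = (?E1 + ?E2) * ?P + ?X * (?D1 + ?D2)"
      using Cons XD by simp
    also have "\<dots> = (?E1 * ?P + ?E2 * ?P) + (?X * ?D1 + ?X * ?D2)"
      using add_mult_distrib_mat[of ?E1 n n ?E2 ?P n] mult_add_distrib_mat[of ?X n n ?D1 n ?D2] c
      by simp
    also have "\<dots> = (?E1 * ?P + ?X * ?D1) + (?E2 * ?P + ?X * ?D2)"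
      using c by (intro eq_matI) auto
    finally show ?case by simp
  qed (use B0 in simp)
  then show ?thesis using assms unfolding Phi_diff_def by simp
qed

lemma Phi_diff_single_factor:
  assumes n: "1 \<le> n" and k: "1 \<le> k" "k \<le> K"
    and only_k: "\<And>j. j \<noteq> k \<Longrightarrow> strict_part n j W = 0\<^sub>m n n"
  shows "Phi_diff n K Z W = - vm n (vm n (prefix_row n Z k) (strict_part n k W)) (suffix_prod n K Z k)"
proof -
  let ?A = "prod_inv n Z [1..<k] (1\<^sub>m n)" and ?X = "Minv n k Z" and ?N = "strict_part n k W"
  let ?T = "prod_inv n Z [Suc k..<K+1] (1\<^sub>m n)"
  have l: "n - 1 < n" using n by simp
  have "[1..<K+1] = [1..<k] @ [k..<K+1]"
    using upt_add_eq_append[of 1 k "K + 1 - k"] k by simp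
  moreover have "[k..<K+1] = k # [Suc k..<K+1]" using k by (simp add: upt_conv_Cons)
  ultimately have split: "[1..<K+1] = [1..<k] @ k # [Suc k..<K+1]" by simp
  have tail: "prod_inv_deriv n Z W [Suc k..<K+1] (1\<^sub>m n) (0\<^sub>m n n) = 0\<^sub>m n n"
    using only_k by (subst prod_inv_deriv_inactive) (auto simp: prod_inv_zero)
  have "prod_inv_deriv n Z W [1..<K+1] (1\<^sub>m n) (0\<^sub>m n n) = prod_inv n Z [1..<k] (Minv_deriv n k Z W * ?T)"
    unfolding split prod_inv_deriv_append using tail only_k
    by (subst prod_inv_deriv_inactive) auto
  also have "\<dots> = ?A * (Minv_deriv n k Z W * ?T)"
    using prod_inv_mult[where B = "1\<^sub>m n" and C = "Minv_deriv n k Z W * ?T" and Y = Z and L = "[1..<k]"]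
    by simp
  also have "\<dots> = - (?A * ?X * (?N * (?X * ?T)))"
    unfolding Minv_deriv_def by (simp add: assoc_mult_mat[of _ n n _ n _ n])
  finally have D: "Phi_diff n K Z W = - row (?A * ?X * (?N * (?X * ?T))) (n - 1)"
    using l unfolding Phi_diff_def by simp
  have r: "row (?A * ?X) (n - 1) = prefix_row n Z k"
    unfolding prefix_row_def using k by (simp add: prod_inv_append prod_inv_mult)
  have S: "?X * ?T = suffix_prod n K Z k"
    unfolding suffix_prod_Cons[OF k(2)] by (simp only: suffix_prod_def)
  have "Phi_diff n K Z W = - row (?A * ?X * (?N * suffix_prod n K Z k)) (n - 1)"
    using D unfolding S .
  also have "row (?A * ?X * (?N * suffix_prod n K Z k)) (n - 1)
      = vm n (prefix_row n Z k) (?N * suffix_prod n K Z k)"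
    unfolding r[symmetric] using l by (intro row_mult_vm) auto
  also have "\<dots> = vm n (vm n (prefix_row n Z k) ?N) (suffix_prod n K Z k)"
    by (rule vm_vm[symmetric]) auto
  finally show ?thesis .
qed

lemma odd_factor_variation:
  fixes x :: "complex vec"
  assumes n: "1 \<le> n" and k: "odd k" "1 \<le> k" "k \<le> K"
    and r: "prefix_row n Z k $ (n - 1) = 1" and x: "x \<in> carrier_vec n" "x $ (n - 1) = 0"
  shows "\<exists>W\<in>dirs n K. Phi_diff n K Z W = - vm n x (suffix_prod n K Z k)"
proof
  define W where "W = (\<lambda>k' i j. if k' = k \<and> i = n \<and> 1 \<le> j \<and> j < n then x $ (j - 1) else 0)"
  show "W \<in> dirs n K" using n k unfolding W_def dirs_def coords_def by auto
  have N: "strict_part n k W $$ (i,j) = (if i = n - 1 \<and> j < n - 1 then x $ j else 0)"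
    if "i < n" "j < n" for i j
    using that k by (auto simp: strict_part_def W_def)
  have "vm n (prefix_row n Z k) (strict_part n k W) = x"
  proof (rule eq_vecI)
    fix j assume "j < dim_vec x"
    then have j: "j < n" using x by simp
    have "vm n (prefix_row n Z k) (strict_part n k W) $ j = strict_part n k W $$ (n - 1, j)"
      using n r j N by (subst vm_index_single_term[of _ _ "n - 1"]) auto
    also have "\<dots> = x $ j" using N[of "n - 1" j] n j x(2) by (cases "j = n - 1") auto
    finally show "vm n (prefix_row n Z k) (strict_part n k W) $ j = x $ j" .
  qed (use x in simp)
  moreover have "strict_part n j W = 0\<^sub>m n n" if "j \<noteq> k" for j
    using that by (intro eq_matI) (auto simp: strict_part_def W_def)
  ultimately show "Phi_diff n K Z W = - vm n x (suffix_prod n K Z k)"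
    using Phi_diff_single_factor[OF n k(2,3)] by simp
qed

lemma even_factor_variation:
  assumes n: "1 \<le> n" and k: "even k" "1 \<le> k" "k \<le> K"
    and p: "p < n - 1" "prefix_row n Z k $ p \<noteq> 0"
  shows "\<exists>W\<in>dirs n K. Phi_diff n K Z W = - vm n (s \<cdot>\<^sub>v unit_vec n (n - 1)) (suffix_prod n K Z k)"
proof
  define c where "c = s / prefix_row n Z k $ p"
  define W where "W = (\<lambda>k' i j. if k' = k \<and> i = Suc p \<and> j = n then c else 0)"
  show "W \<in> dirs n K" using n k p unfolding W_def dirs_def coords_def by auto
  have N: "strict_part n k W $$ (i,j) = (if i = p \<and> j = n - 1 then c else 0)"
    if "i < n" "j < n" for i j
    using that k p by (auto simp: strict_part_def W_def)
  have "vm n (prefix_row n Z k) (strict_part n k W) = s \<cdot>\<^sub>v unit_vec n (n - 1)"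
  proof (rule eq_vecI)
    fix j assume "j < dim_vec (s \<cdot>\<^sub>v unit_vec n (n - 1))"
    then have j: "j < n" by simp
    then show "vm n (prefix_row n Z k) (strict_part n k W) $ j = (s \<cdot>\<^sub>v unit_vec n (n - 1)) $ j"
      using p N by (subst vm_index_single_term[of _ _ p]) (auto simp: c_def)
  qed simp
  moreover have "strict_part n j W = 0\<^sub>m n n" if "j \<noteq> k" for j
    using that by (intro eq_matI) (auto simp: strict_part_def W_def)
  ultimately show "Phi_diff n K Z W = - vm n (s \<cdot>\<^sub>v unit_vec n (n - 1)) (suffix_prod n K Z k)"
    using Phi_diff_single_factor[OF n k(2,3)] by simp
qed

lemma two_variations_reach:
  assumes n: "1 \<le> n" and W: "W1 \<in> dirs n K" "W2 \<in> dirs n K"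
    and D1: "Phi_diff n K Z W1 = - vm n u (A * S)" and D2: "Phi_diff n K Z W2 = - vm n w S"
    and carr: "A \<in> carrier_mat n n" "S \<in> carrier_mat n n" "R \<in> carrier_mat n n"
      "u \<in> carrier_vec n" "w \<in> carrier_vec n" "v \<in> carrier_vec n"
    and RS: "R * S = 1\<^sub>m n" and y: "y = - vm n v R" and solve: "vm n u A + w = y"
  shows "\<exists>W\<in>dirs n K. Phi_diff n K Z W = v"
proof
  show "(\<lambda>k i j. W1 k i j + W2 k i j) \<in> dirs n K" using W by (rule dirs_add)
  have "Phi_diff n K Z (\<lambda>k i j. W1 k i j + W2 k i j) = - vm n (vm n u A) S + - vm n w S"
    using carr by (simp add: Phi_diff_add[OF n] D1 D2 vm_vm)
  also have "\<dots> = - vm n (vm n u A + w) S"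
    using carr by (simp add: vm_add_vec) (intro eq_vecI; simp)
  also have "\<dots> = vm n v (R * S)" using carr by (simp add: solve y vm_uminus_vec vm_vm)
  also have "\<dots> = v" using carr by (simp add: RS vm_one)
  finally show "Phi_diff n K Z (\<lambda>k i j. W1 k i j + W2 k i j) = v" .
qed

text \<open>If the first nontrivial factor a is odd, the row r_{a+1} = r_a X_{a+1} has a nonzero
  entry before the last one; otherwise M_a would have trivial last row.\<close>

lemma odd_next_prefix_entry:
  assumes n: "1 \<le> n" and a: "odd a" and j0: "j0 < n - 1" "Mk n a Z $$ (n - 1, j0) \<noteq> 0"
  shows "\<exists>p<n - 1. vm n (row (Minv n a Z) (n - 1)) (Minv n (Suc a) Z) $ p \<noteq> 0"
proof (rule ccontr)
  let ?l = "n - 1" and ?X = "Minv n a Z" and ?M = "Mk n (Suc a) Z"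
  let ?r = "vm n (row ?X ?l) (Minv n (Suc a) Z)"
  assume "\<not> ?thesis"
  then have zero: "\<And>p. p < ?l \<Longrightarrow> ?r $ p = 0" by auto
  have l: "?l < n" using n by simp
  have row_back: "vm n ?r ?M = row ?X ?l"
    using l by (simp add: vm_vm Minv_Mk vm_one)
  have entry: "?X $$ (?l, j) = ?r $ ?l * (if j = ?l then 1 else 0)" if j: "j < n" for j
  proof -
    have "?X $$ (?l, j) = vm n ?r ?M $ j" using row_back j l by simp
    also have "\<dots> = ?r $ ?l * ?M $$ (?l, j)"
      using zero j l by (intro vm_index_single_term) auto
    finally show ?thesis using unit_row_Mk_even[of "Suc a" n Z] a j unfolding unit_row_def by simp
  qed
  have "?X $$ (?l, ?l) = 1" using unit_col_Minv_odd[OF n a, of Z] l unfolding unit_col_def by simp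
  then have "unit_row n ?l ?X" using entry l unfolding unit_row_def by auto
  then have "unit_row n ?l (Mk n a Z)" using l by (intro unit_row_right_inverse[OF _ _ _ Minv_Mk]) auto
  then show False using j0 unfolding unit_row_def by auto
qed

text \<open>For even a, a nonzero entry of the last column of M_a above the diagonal forces one in
  M_a^{-1}: otherwise M_a^{-1}, and hence M_a, would have unit last column.\<close>

lemma even_inverse_column_entry:
  assumes n1: "1 \<le> n" and a: "even a" and i0: "i0 < n - 1" "Mk n a Z $$ (i0, n - 1) \<noteq> 0"
  shows "\<exists>p<n - 1. Minv n a Z $$ (p, n - 1) \<noteq> 0"
proof -
  define l where "l = n - 1"
  let ?Xa = "Minv n a Z"
  have l: "l < n" using n1 by (simp add: l_def)
  have "\<exists>p<l. ?Xa $$ (p, l) \<noteq> 0"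
  proof (rule ccontr)
    assume none: "\<not> (\<exists>p<l. ?Xa $$ (p, l) \<noteq> 0)"
    have "unit_col n l ?Xa"
      unfolding unit_col_def
    proof (intro allI impI)
      fix i assume i: "i < n"
      show "?Xa $$ (i, l) = (if i = l then 1 else 0)"
      proof (cases "i = l")
        case True
        then show ?thesis using unit_row_Minv_even[OF n1 a(1), of Z] l unfolding unit_row_def l_def by simp
      next
        case False
        then have "i < l" using i unfolding l_def by simp
        then show ?thesis using none False by auto
      qed
    qed
    then have "unit_col n l (Mk n a Z)" using l by (intro unit_col_left_inverse[OF _ _ _ Mk_Minv]) auto
    then show False using i0 unfolding unit_col_def l_def by auto
  qed
  then show ?thesis by (simp add: l_def)
qed

lemma reach_first_nontrivial_odd:
  assumes n: "2 \<le> n" and a: "odd a" "1 \<le> a" "a < K"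
    and prefix: "\<And>k. 1 \<le> k \<Longrightarrow> k < a \<Longrightarrow> fixes_last n (Minv n k Z)"
    and j0: "j0 < n - 1" "Mk n a Z $$ (n - 1, j0) \<noteq> 0"
    and v: "v \<in> carrier_vec n"
  shows "\<exists>W\<in>dirs n K. Phi_diff n K Z W = v"
proof -
  define l where "l = n - 1"
  have n1: "1 \<le> n" and l: "l < n" using n by (auto simp: l_def)
  have "prefix_row n Z a = vm n (prefix_row n Z (a - 1)) (Minv n a Z)"
    using prefix_row_Suc[OF n1, of Z "a - 1"] a by simp
  then have r_a: "prefix_row n Z a = row (Minv n a Z) l"
    using prefix n1 a by (simp add: prefix_row_fixed vm_unit_vec l_def)
  have r_a_last: "prefix_row n Z a $ l = 1"
    using r_a unit_col_Minv_odd[OF n1 a(1), of Z] l unfolding unit_col_def l_def by simp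
  obtain p where p: "p < l" "prefix_row n Z (Suc a) $ p \<noteq> 0"
    using odd_next_prefix_entry[OF n1 a(1) j0] r_a prefix_row_Suc[OF n1] by (auto simp: l_def)
  obtain R where R: "R \<in> carrier_mat n n" "R * suffix_prod n K Z (Suc a) = 1\<^sub>m n"
    using prod_inv_left_invertible unfolding suffix_prod_def by blast
  define y where "y = - vm n v R"
  define x where "x = vm n (y - y $ l \<cdot>\<^sub>v unit_vec n l) (Mk n a Z)"
  have x_last: "x $ l = 0"
    unfolding x_def using l unit_col_Mk_odd[OF a(1), of n Z]
    by (subst vm_unit_col) (auto simp: l_def y_def)
  have solve: "vm n x (Minv n a Z) + y $ l \<cdot>\<^sub>v unit_vec n l = y"
    by (intro eq_vecI) (auto simp: x_def vm_vm Mk_Minv vm_one y_def)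
  have x: "x \<in> carrier_vec n" by (simp add: x_def)
  obtain W1 where W1: "W1 \<in> dirs n K" "Phi_diff n K Z W1 = - vm n x (suffix_prod n K Z a)"
    using odd_factor_variation[where x = x and k = a and K = K and Z = Z] n1 a r_a_last x x_last
    unfolding l_def by auto
  obtain W2 where W2: "W2 \<in> dirs n K"
      "Phi_diff n K Z W2 = - vm n (y $ l \<cdot>\<^sub>v unit_vec n l) (suffix_prod n K Z (Suc a))"
    using even_factor_variation[where k = "Suc a" and K = K and p = p and Z = Z and s = "y $ l"] n1 a p
    unfolding l_def by auto
  have "suffix_prod n K Z a = Minv n a Z * suffix_prod n K Z (Suc a)"
    using a by (simp add: suffix_prod_Cons)
  then show ?thesis
    using two_variations_reach[OF n1 W1(1) W2(1) _ W2(2) _ _ R(1) x _ v R(2) y_def solve] W1(2)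
    by simp
qed

text \<open>Case a even: vary the last rows of M_{a-1} and of M_{a+1}; here r_{a-1} = e_n and
  some entry (p,n), p < n, of X_a is nonzero since M_a has nontrivial last column.\<close>

lemma reach_first_nontrivial_even:
  assumes n: "2 \<le> n" and a: "even a" "1 \<le> a" "a < K"
    and prefix: "\<And>k. 1 \<le> k \<Longrightarrow> k < a \<Longrightarrow> fixes_last n (Minv n k Z)"
    and i0: "i0 < n - 1" "Mk n a Z $$ (i0, n - 1) \<noteq> 0"
    and v: "v \<in> carrier_vec n"
  shows "\<exists>W\<in>dirs n K. Phi_diff n K Z W = v"
proof -
  define l where "l = n - 1"
  define b where "b = a - 1"
  let ?Xa = "Minv n a Z"
  have n1: "1 \<le> n" and l: "l < n" using n by (auto simp: l_def)
  have b: "odd b" "1 \<le> b" "Suc b = a" using a unfolding b_def by presburger+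
  have r_b: "prefix_row n Z b = unit_vec n l"
    using prefix n1 b unfolding l_def by (intro prefix_row_fixed) auto
  have r_a: "prefix_row n Z a = row ?Xa l"
    using prefix_row_Suc[OF n1, of Z b] r_b b l by (simp add: vm_unit_vec)
  have "prefix_row n Z (Suc a) $ l = prefix_row n Z a $ l"
    unfolding prefix_row_Suc[OF n1] using unit_col_Minv_odd[OF n1, of "Suc a" Z] a l
    by (subst vm_unit_col) (auto simp: l_def)
  then have r_next_last: "prefix_row n Z (Suc a) $ l = 1"
    using r_a unit_row_Minv_even[OF n1 a(1), of Z] l by (simp add: l_def unit_row_def)
  obtain p where p: "p < l" "?Xa $$ (p, l) \<noteq> 0"
    using even_inverse_column_entry[OF n1 a(1) i0] unfolding l_def by blast
  obtain R where R: "R \<in> carrier_mat n n" "R * suffix_prod n K Z (Suc a) = 1\<^sub>m n"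
    using prod_inv_left_invertible unfolding suffix_prod_def by blast
  define y where "y = - vm n v R"
  define e where "e = (y $ l / ?Xa $$ (p, l)) \<cdot>\<^sub>v unit_vec n p"
  define x' where "x' = vm n e (Mk n b Z)"
  define x where "x = y - vm n e ?Xa"
  have x'_last: "x' $ l = 0"
    unfolding x'_def using l p unit_col_Mk_odd[OF b(1), of n Z]
    by (subst vm_unit_col) (auto simp: e_def l_def)
  have "vm n e ?Xa $ l = e $ p * ?Xa $$ (p, l)"
    using l p by (intro vm_index_single_term) (auto simp: e_def)
  then have x_last: "x $ l = 0" using l p by (simp add: x_def e_def)
  have "vm n x' (Minv n b Z * ?Xa) = vm n (vm n x' (Minv n b Z)) ?Xa" by (rule vm_vm[symmetric]) auto
  also have "vm n x' (Minv n b Z) = e" unfolding x'_def by (simp add: vm_vm Mk_Minv vm_one e_def)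
  finally have "vm n x' (Minv n b Z * ?Xa) = vm n e ?Xa" .
  moreover have "y \<in> carrier_vec n" by (simp add: y_def)
  ultimately have solve: "vm n x' (Minv n b Z * ?Xa) + x = y" unfolding x_def by (intro eq_vecI) auto
  have x': "x' \<in> carrier_vec n" and x: "x \<in> carrier_vec n" by (simp_all add: x'_def x_def y_def)
  have r_b_last: "prefix_row n Z b $ l = 1" using r_b l by simp
  obtain W1 where W1: "W1 \<in> dirs n K" "Phi_diff n K Z W1 = - vm n x' (suffix_prod n K Z b)"
    using odd_factor_variation[where x = x' and k = b and K = K and Z = Z] n1 a b r_b_last x' x'_last
    unfolding l_def by auto
  obtain W2 where W2: "W2 \<in> dirs n K" "Phi_diff n K Z W2 = - vm n x (suffix_prod n K Z (Suc a))"
    using odd_factor_variation[where x = x and k = "Suc a" and K = K and Z = Z] n1 a r_next_last x x_last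
    unfolding l_def by auto
  have "suffix_prod n K Z b = Minv n b Z * ?Xa * suffix_prod n K Z (Suc a)"
    using a b by (simp add: suffix_prod_Cons[of b] suffix_prod_Cons[of a] assoc_mult_mat[of _ n n _ n _ n])
  then show ?thesis
    using two_variations_reach[OF n1 W1(1) W2(1) _ W2(2) _ _ R(1) x' x v R(2) y_def solve] W1(2)
    by simp
qed

lemma reach_all_outside_S:
  assumes n: "2 \<le> n" and S: "Z \<notin> S_set n K" and v: "v \<in> carrier_vec n"
  shows "\<exists>W\<in>dirs n K. Phi_diff n K Z W = v"
proof -
  obtain a where a: "1 \<le> a" "a < K" "\<not> last_line_trivial n Z a"
    and first: "\<And>k. 1 \<le> k \<Longrightarrow> k < a \<Longrightarrow> last_line_trivial n Z k"
    using S exists_least_iff[of "\<lambda>k. 1 \<le> k \<and> k < K \<and> \<not> last_line_trivial n Z k"]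
    unfolding S_set_iff by (metis order.strict_trans)
  have prefix: "\<And>k. 1 \<le> k \<Longrightarrow> k < a \<Longrightarrow> fixes_last n (Minv n k Z)"
    using first n by (intro fixes_last_Minv)
  show ?thesis
  proof (cases "odd a")
    case True
    then obtain j where j: "1 \<le> j" "j \<le> n - 1" "Z a n j \<noteq> 0"
      using a unfolding last_line_trivial_def by auto
    then have entry: "Mk n a Z $$ (n - 1, j - 1) \<noteq> 0" using True n by (simp add: Mk_def)
    have "j - 1 < n - 1" using j by simp
    then show ?thesis using reach_first_nontrivial_odd[OF n True a(1,2) prefix _ entry v] by blast
  next
    case False
    then obtain i where i: "1 \<le> i" "i \<le> n - 1" "Z a i n \<noteq> 0"
      using a unfolding last_line_trivial_def by auto
    then have entry: "Mk n a Z $$ (i - 1, n - 1) \<noteq> 0" using False n by (simp add: Mk_def)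
    have "i - 1 < n - 1" using i by simp
    moreover have "even a" using False by simp
    ultimately show ?thesis using reach_first_nontrivial_even[OF n _ a(1,2) prefix _ entry v] by blast
  qed
qed

theorem lemma2p5:
  fixes n K :: nat and Z :: "nat \<Rightarrow> nat \<Rightarrow> nat \<Rightarrow> complex"
  assumes "n \<ge> 2" and "K \<ge> 2"
  shows "submersion_at n K Z \<longleftrightarrow> Z \<notin> S_set n K"
proof -
  have n: "1 \<le> n" and K: "1 \<le> K" using assms by auto
  show ?thesis
    unfolding submersion_iff_Phi_diff_onto[OF n]
  proof
    assume "\<forall>v\<in>carrier_vec n. \<exists>W\<in>dirs n K. Phi_diff n K Z W = v"
    then have "\<exists>W\<in>dirs n K. Phi_diff n K Z W = unit_vec n (n - 1)" by simp
    then show "Z \<notin> S_set n K" using unit_vec_not_reached[OF assms(1) K] by blast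
  next
    assume "Z \<notin> S_set n K"
    then show "\<forall>v\<in>carrier_vec n. \<exists>W\<in>dirs n K. Phi_diff n K Z W = v"
      using reach_all_outside_S[OF assms(1)] by blast
  qed
qed

end
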